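(* Let $n\ge1$, let $\{b_{ij}:1\le j\le i\le n\}$ be real scalars with $b_{ij}:=b_{ji}$ for $i<j$, let $\{g_{ij}:i\ge j\}$ be i.i.d. $N(0,1)$, and let $X$ be the $n\times n$ symmetric matrix with $X_{ij}=X_{ji}=g_{ij}b_{ij}$ ($i\ge j$). Let $\sigma:=\max_i\sqrt{\sum_j b_{ij}^2}$ and $\sigma_*:=\max_{ij}|b_{ij}|$, and suppose $\sigma_*\le 1$. For each positive integer $r$, let $Y_r$ be the $r\times r$ symmetric random matrix such that $\{(Y_r)_{ij}:i\ge j\}$ are independent $N(0,1)$ random variables. Then for every positive integer $p$, $$\mathbb{E}\operatorname{Tr}[X^{2p}]\le \frac{n}{\lceil\sigma^2\rceil+p}\,\mathbb{E}\operatorname{Tr}\Big[Y_{\lceil\sigma^2\rceil+p}^{2p}\Big].$$ *)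

theory Defs
  imports "HOL-Probability.Probability" "Jordan_Normal_Form.Matrix"
begin

definition std_gaussian :: "real measure" where
  "std_gaussian = density lborel std_normal_density"

text \<open>Index set of the lower triangle (including the diagonal) of an n x n matrix,
  0-based: pairs (i,j) with j \<le> i < n.\<close>
definition lower_idx :: "nat \<Rightarrow> (nat \<times> nat) set" where
  "lower_idx n = {(i, j). j \<le> i \<and> i < n}"

definition gauss_family :: "nat \<Rightarrow> ((nat \<times> nat) \<Rightarrow> real) measure" where
  "gauss_family n = PiM (lower_idx n) (\<lambda>_. std_gaussian)"

definition sym_gauss_mat :: "nat \<Rightarrow> (nat \<Rightarrow> nat \<Rightarrow> real) \<Rightarrow> ((nat \<times> nat) \<Rightarrow> real) \<Rightarrow> real mat" where
  "sym_gauss_mat n b g = mat n n (\<lambda>(i, j). if j \<le> i then g (i, j) * b i j else g (j, i) * b j i)"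

definition mtrace :: "real mat \<Rightarrow> real" where
  "mtrace A = (\<Sum>i<dim_row A. A $$ (i, i))"

definition GOE_like :: "nat \<Rightarrow> ((nat \<times> nat) \<Rightarrow> real) \<Rightarrow> real mat" where
  "GOE_like r g = sym_gauss_mat r (\<lambda>_ _. 1) g"

end

theory Submission
  imports Defs
begin

text \<open>
  Expanding the trace, \<open>E Tr X^(2p)\<close> is a sum over closed walks of length \<open>2p\<close> in \<open>{0..<n}\<close> of
  the product of the \<open>b\<close>'s along the walk times a product of Gaussian moments, one for each
  edge, determined by how often the edge is traversed. Grouping walks by their shape (vertices
  renamed in order of first visit), the moment factor depends only on the shape, and it vanishes
  unless every edge is traversed an even number of times; such a shape visits \<open>m \<le> p + 1\<close>
  vertices. For a fixed shape, the \<open>b\<close>-products summed over all injective labellings are at most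
  \<open>n \<sigma>^(2(m-1))\<close>: the product is bounded by the squares of the \<open>b\<close>'s on the spanning tree of
  first visits (all other factors have modulus at most 1), and summing out the vertices of this
  tree from the leaves uses \<open>\<Sum>\<^sub>j b\<^sub>i\<^sub>j\<^sup>2 \<le> \<sigma>\<^sup>2\<close>. For \<open>Y\<^sub>r\<close> with \<open>r = \<lceil>\<sigma>\<^sup>2\<rceil> + p\<close> the same shape has
  \<open>r (r - 1) \<cdots> (r - m + 1) \<ge> r \<sigma>^(2(m-1))\<close> labellings, each of weight 1, because
  \<open>r - m + 1 \<ge> \<lceil>\<sigma>\<^sup>2\<rceil>\<close>.
\<close>

section \<open>Closed walks and matrix powers\<close>

definition lists_of_length :: "nat \<Rightarrow> nat \<Rightarrow> nat list set" where
  "lists_of_length k N = {xs. length xs = k \<and> set xs \<subseteq> {..<N}}"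

lemma finite_lists_of_length [simp]: "finite (lists_of_length k N)"
  unfolding lists_of_length_def
  using finite_lists_length_eq[of "{..<N}" k] by (simp add: conj_commute)

lemma lists_of_length_0: "lists_of_length 0 N = {[]}"
  unfolding lists_of_length_def by auto

lemma lists_of_length_nth: "xs \<in> lists_of_length k N \<Longrightarrow> t < k \<Longrightarrow> xs ! t < N"
  unfolding lists_of_length_def by (auto simp: subset_iff)

lemma sum_lists_of_length_Suc_snoc:
  "(\<Sum>xs\<in>lists_of_length (Suc k) N. f xs) = (\<Sum>xs\<in>lists_of_length k N. \<Sum>x<N. f (xs @ [x]))"
proof -
  have "(\<Sum>xs\<in>lists_of_length (Suc k) N. f xs)
      = (\<Sum>(xs, x)\<in>lists_of_length k N \<times> {..<N}. f (xs @ [x]))"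
    by (rule sum.reindex_bij_witness[of _ "\<lambda>(xs, x). xs @ [x]" "\<lambda>ys. (butlast ys, last ys)"])
      (auto simp: lists_of_length_def subset_iff dest: in_set_butlastD
        intro!: append_butlast_last_id last_in_set simp flip: length_greater_0_conv)
  then show ?thesis by (simp add: sum.cartesian_product)
qed

lemma sum_lists_of_length_Suc_Cons:
  "(\<Sum>xs\<in>lists_of_length (Suc k) N. f xs) = (\<Sum>x<N. \<Sum>xs\<in>lists_of_length k N. f (x # xs))"
proof -
  have "(\<Sum>xs\<in>lists_of_length (Suc k) N. f xs)
      = (\<Sum>(x, xs)\<in>{..<N} \<times> lists_of_length k N. f (x # xs))"
    by (rule sum.reindex_bij_witness[of _ "\<lambda>(x, xs). x # xs" "\<lambda>ys. (hd ys, tl ys)"])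
      (auto simp: lists_of_length_def length_Suc_conv split: prod.splits)
  then show ?thesis by (simp add: sum.cartesian_product)
qed

definition path_prod :: "(nat \<Rightarrow> nat \<Rightarrow> 'a :: comm_monoid_mult) \<Rightarrow> nat list \<Rightarrow> 'a" where
  "path_prod f vs = (\<Prod>t<length vs - 1. f (vs ! t) (vs ! Suc t))"

definition cycle_prod :: "(nat \<Rightarrow> nat \<Rightarrow> 'a :: comm_monoid_mult) \<Rightarrow> nat list \<Rightarrow> 'a" where
  "cycle_prod f ys = (\<Prod>t<length ys. f (ys ! t) (ys ! (Suc t mod length ys)))"

lemma path_prod_snoc:
  assumes "vs \<noteq> []"
  shows "path_prod f (vs @ [x]) = path_prod f vs * f (last vs) x"
proof -
  obtain m where m: "length vs = Suc m" using assms by (cases vs) auto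
  have "path_prod f (vs @ [x]) = (\<Prod>t<m. f (vs ! t) (vs ! Suc t)) * f (vs ! m) x"
    unfolding path_prod_def using m by (simp add: nth_append)
  then show ?thesis
    using m assms by (simp add: path_prod_def last_conv_nth)
qed

lemma path_prod_closed: "path_prod f (i # xs @ [i]) = cycle_prod f (i # xs)"
  unfolding path_prod_def cycle_prod_def
proof (rule prod.cong)
  fix t assume "t \<in> {..<length (i # xs)}"
  then consider "t = length xs" | "t < length xs" by fastforce
  then show "f ((i # xs @ [i]) ! t) ((i # xs @ [i]) ! Suc t)
      = f ((i # xs) ! t) ((i # xs) ! (Suc t mod length (i # xs)))"
    by cases (auto simp: nth_append nth_Cons')
qed simp

lemma mat_pow_Suc_entry_path_sum:
  assumes A: "A \<in> carrier_mat N N" and i: "i < N" and j: "j < N"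
  shows "(A ^\<^sub>m Suc k) $$ (i, j)
       = (\<Sum>xs\<in>lists_of_length k N. path_prod (\<lambda>a b. A $$ (a, b)) (i # xs @ [j]))"
  using j
proof (induction k arbitrary: j)
  case 0
  then show ?case
    using A i by (simp add: lists_of_length_0 path_prod_def)
next
  case (Suc k)
  let ?w = "path_prod (\<lambda>a b. A $$ (a, b))"
  have "(A ^\<^sub>m Suc (Suc k)) $$ (i, j) = (\<Sum>y<N. (A ^\<^sub>m Suc k) $$ (i, y) * A $$ (y, j))"
    using A i Suc.prems
    by (subst pow_mat.simps(2)) (simp add: scalar_prod_def lessThan_atLeast0 del: pow_mat.simps)
  also have "\<dots> = (\<Sum>y<N. \<Sum>xs\<in>lists_of_length k N. ?w (i # xs @ [y]) * A $$ (y, j))"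
    by (simp add: Suc.IH sum_distrib_right del: pow_mat.simps)
  also have "\<dots> = (\<Sum>xs\<in>lists_of_length k N. \<Sum>y<N. ?w (i # (xs @ [y]) @ [j]))"
  proof -
    have "?w (i # (xs @ [y]) @ [j]) = ?w (i # xs @ [y]) * A $$ (y, j)" for xs y
      using path_prod_snoc[of "i # xs @ [y]"] by simp
    then show ?thesis by (subst sum.swap) (simp only:)
  qed
  also have "\<dots> = (\<Sum>xs\<in>lists_of_length (Suc k) N. ?w (i # xs @ [j]))"
    by (simp only: sum_lists_of_length_Suc_snoc)
  finally show ?case .
qed

lemma mtrace_mat_pow_cycle_sum:
  assumes A: "A \<in> carrier_mat N N" and L: "L \<ge> 1"
  shows "mtrace (A ^\<^sub>m L) = (\<Sum>ys\<in>lists_of_length L N. cycle_prod (\<lambda>a b. A $$ (a, b)) ys)"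
proof -
  obtain K where K: "L = Suc K" using L by (cases L) auto
  have "mtrace (A ^\<^sub>m L) = (\<Sum>i<N. (A ^\<^sub>m Suc K) $$ (i, i))"
    using A K unfolding mtrace_def by simp
  also have "\<dots> = (\<Sum>i<N. \<Sum>xs\<in>lists_of_length K N. cycle_prod (\<lambda>a b. A $$ (a, b)) (i # xs))"
    by (intro sum.cong refl)
      (simp add: mat_pow_Suc_entry_path_sum[OF A] path_prod_closed del: pow_mat.simps)
  also have "\<dots> = (\<Sum>ys\<in>lists_of_length L N. cycle_prod (\<lambda>a b. A $$ (a, b)) ys)"
    by (simp add: K sum_lists_of_length_Suc_Cons)
  finally show ?thesis .
qed

section \<open>Edges of a closed walk\<close>

definition lower_pair :: "nat \<Rightarrow> nat \<Rightarrow> nat \<times> nat" where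
  "lower_pair a b = (max a b, min a b)"

definition cycle_edge :: "nat list \<Rightarrow> nat \<Rightarrow> nat \<times> nat" where
  "cycle_edge ys t = lower_pair (ys ! t) (ys ! (Suc t mod length ys))"

definition cycle_edges :: "nat list \<Rightarrow> (nat \<times> nat) set" where
  "cycle_edges ys = cycle_edge ys ` {..<length ys}"

definition edge_mult :: "nat list \<Rightarrow> nat \<times> nat \<Rightarrow> nat" where
  "edge_mult ys e = card {t. t < length ys \<and> cycle_edge ys t = e}"

lemma lower_pair_commute: "lower_pair a b = lower_pair b a"
  unfolding lower_pair_def by (simp add: max.commute min.commute)

lemma lower_pair_eq_iff:
  "lower_pair a b = lower_pair c d \<longleftrightarrow> (a = c \<and> b = d) \<or> (a = d \<and> b = c)"
  unfolding lower_pair_def by (auto simp: max_def min_def)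

lemma finite_cycle_edges [simp]: "finite (cycle_edges ys)"
  unfolding cycle_edges_def by simp

lemma finite_lower_idx [simp]: "finite (lower_idx N)"
  by (rule finite_subset[of _ "{..<N} \<times> {..<N}"]) (auto simp: lower_idx_def)

lemma Suc_mod_less: "t < (n::nat) \<Longrightarrow> Suc t mod n < n"
  by simp

lemma cycle_edges_subset_lower_idx:
  assumes "ys \<in> lists_of_length L N"
  shows "cycle_edges ys \<subseteq> lower_idx N"
proof
  fix e assume "e \<in> cycle_edges ys"
  then obtain t where t: "t < length ys" and e: "e = cycle_edge ys t"
    unfolding cycle_edges_def by blast
  have "length ys = L" using assms unfolding lists_of_length_def by simp
  then have "ys ! t < N" "ys ! (Suc t mod length ys) < N"
    using assms t by (auto intro!: lists_of_length_nth Suc_mod_less)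
  then show "e \<in> lower_idx N" unfolding e cycle_edge_def lower_pair_def lower_idx_def by auto
qed

lemma edge_mult_eq_0: "e \<notin> cycle_edges ys \<Longrightarrow> edge_mult ys e = 0"
  unfolding edge_mult_def cycle_edges_def by (auto simp: card_eq_0_iff)

lemma edge_mult_pos: "t < length ys \<Longrightarrow> edge_mult ys (cycle_edge ys t) \<ge> 1"
  unfolding edge_mult_def by (auto simp: Suc_le_eq card_gt_0_iff)

lemma sum_edge_mult: "(\<Sum>e\<in>cycle_edges ys. edge_mult ys e) = length ys"
  unfolding edge_mult_def cycle_edges_def
  using sum.image_gen[of "{..<length ys}" "\<lambda>_. 1::nat" "cycle_edge ys"] by simp

lemma prod_cycle_edge:
  "(\<Prod>t<length ys. g (cycle_edge ys t)) = (\<Prod>e\<in>cycle_edges ys. g e ^ edge_mult ys e)"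
proof -
  have "(\<Prod>t<length ys. g (cycle_edge ys t))
      = (\<Prod>e\<in>cycle_edges ys. \<Prod>t\<in>{t \<in> {..<length ys}. cycle_edge ys t = e}. g (cycle_edge ys t))"
    unfolding cycle_edges_def by (rule prod.image_gen) simp
  also have "\<dots> = (\<Prod>e\<in>cycle_edges ys. \<Prod>t\<in>{t \<in> {..<length ys}. cycle_edge ys t = e}. g e)"
    by (intro prod.cong refl) simp
  finally show ?thesis by (simp add: edge_mult_def)
qed

lemma prod_cycle_edges_extend:
  assumes "finite E" "cycle_edges ys \<subseteq> E" "\<And>e. h e 0 = 1"
  shows "(\<Prod>e\<in>cycle_edges ys. h e (edge_mult ys e)) = (\<Prod>e\<in>E. h e (edge_mult ys e))"
  using assms by (intro prod.mono_neutral_left) (auto simp: edge_mult_eq_0)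

definition map_edge :: "(nat \<Rightarrow> nat) \<Rightarrow> nat \<times> nat \<Rightarrow> nat \<times> nat" where
  "map_edge f e = lower_pair (f (fst e)) (f (snd e))"

lemma map_edge_lower_pair: "map_edge f (lower_pair a b) = lower_pair (f a) (f b)"
  unfolding map_edge_def lower_pair_def by (cases "a \<le> b") (auto simp: max_def min_def)

lemma cycle_edge_map:
  "t < length s \<Longrightarrow> cycle_edge (map f s) t = map_edge f (cycle_edge s t)"
  unfolding cycle_edge_def by (simp add: map_edge_lower_pair Suc_mod_less)

lemma inj_on_map_edge_cycle_edges:
  assumes "inj_on f (set s)"
  shows "inj_on (map_edge f) (cycle_edges s)"
proof (rule inj_onI)
  fix e1 e2 assume "e1 \<in> cycle_edges s" "e2 \<in> cycle_edges s" and eq: "map_edge f e1 = map_edge f e2"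
  then obtain a b c d where e: "e1 = lower_pair a b" "e2 = lower_pair c d"
    and in_s: "a \<in> set s" "b \<in> set s" "c \<in> set s" "d \<in> set s"
    unfolding cycle_edges_def cycle_edge_def by (auto intro!: nth_mem Suc_mod_less)
  have "(f a = f c \<and> f b = f d) \<or> (f a = f d \<and> f b = f c)"
    using eq unfolding e map_edge_lower_pair lower_pair_eq_iff .
  then have "(a = c \<and> b = d) \<or> (a = d \<and> b = c)"
    using in_s inj_onD[OF assms] by metis
  then show "e1 = e2" unfolding e using lower_pair_commute by metis
qed

lemma prod_cycle_edges_map:
  assumes inj: "inj_on f (set s)"
  shows "(\<Prod>e\<in>cycle_edges (map f s). h (edge_mult (map f s) e)) = (\<Prod>e\<in>cycle_edges s. h (edge_mult s e))"
proof -
  have edges: "cycle_edges (map f s) = map_edge f ` cycle_edges s"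
    unfolding cycle_edges_def image_image by (intro image_cong) (simp_all add: cycle_edge_map)
  have "edge_mult (map f s) (map_edge f e) = edge_mult s e" if e: "e \<in> cycle_edges s" for e
  proof -
    have "{t. t < length s \<and> map_edge f (cycle_edge s t) = map_edge f e}
        = {t. t < length s \<and> cycle_edge s t = e}"
      using inj_onD[OF inj_on_map_edge_cycle_edges[OF inj] _ _ e]
      unfolding cycle_edges_def by (metis image_eqI lessThan_iff)
    then show ?thesis unfolding edge_mult_def by (simp add: cycle_edge_map cong: conj_cong)
  qed
  then show ?thesis
    unfolding edges by (simp add: prod.reindex[OF inj_on_map_edge_cycle_edges[OF inj]])
qed

definition even_walk :: "nat list \<Rightarrow> bool" where
  "even_walk ys \<longleftrightarrow> (\<forall>e\<in>cycle_edges ys. even (edge_mult ys e))"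

lemma even_walk_edge_mult_ge_2:
  assumes "even_walk ys" "t < length ys"
  shows "edge_mult ys (cycle_edge ys t) \<ge> 2"
proof -
  have "even (edge_mult ys (cycle_edge ys t))"
    using assms unfolding even_walk_def cycle_edges_def by simp
  with edge_mult_pos[OF assms(2)] show ?thesis by presburger
qed

section \<open>Gaussian moments and the expected trace\<close>

definition gauss_moment :: "nat \<Rightarrow> real" where
  "gauss_moment k = (\<integral>x. x ^ k \<partial>std_gaussian)"

definition walk_weight :: "nat list \<Rightarrow> real" where
  "walk_weight ys = (\<Prod>e\<in>cycle_edges ys. gauss_moment (edge_mult ys e))"

lemma prob_space_std_gaussian: "prob_space std_gaussian"
  unfolding std_gaussian_def by (rule prob_space_normal_density) simp

lemma integrable_std_gaussian_power: "integrable std_gaussian (\<lambda>x. x ^ k)"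
  unfolding std_gaussian_def
  by (subst integrable_density) (auto simp: integrable_std_normal_moment)

lemma gauss_moment_lborel: "gauss_moment k = (\<integral>x. std_normal_density x * x ^ k \<partial>lborel)"
  unfolding gauss_moment_def std_gaussian_def
  using integral_density[of "\<lambda>x. x ^ k" lborel std_normal_density] by simp

lemma gauss_moment_even: "gauss_moment (2 * k) = fact (2 * k) / (2 ^ k * fact k)"
  unfolding gauss_moment_lborel by (rule integral_std_normal_moment_even)

lemma gauss_moment_odd: "odd k \<Longrightarrow> gauss_moment k = 0"
  using integral_std_normal_moment_odd by (elim oddE) (simp add: gauss_moment_lborel)

lemma gauss_moment_0 [simp]: "gauss_moment 0 = 1"
  using gauss_moment_even[of 0] by simp

lemma gauss_moment_nonneg: "gauss_moment k \<ge> 0"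
  by (cases "even k") (auto elim: evenE simp: gauss_moment_even gauss_moment_odd)

lemma walk_weight_nonneg: "walk_weight ys \<ge> 0"
  unfolding walk_weight_def by (intro prod_nonneg) (simp add: gauss_moment_nonneg)

lemma even_walk_if_walk_weight_nonzero: "walk_weight ys \<noteq> 0 \<Longrightarrow> even_walk ys"
  unfolding walk_weight_def even_walk_def using gauss_moment_odd by fastforce

lemma walk_weight_map: "inj_on f (set ys) \<Longrightarrow> walk_weight (map f ys) = walk_weight ys"
  unfolding walk_weight_def by (rule prod_cycle_edges_map)

interpretation std_gaussian_product: product_sigma_finite "\<lambda>_. std_gaussian"
  unfolding product_sigma_finite_def
  using prob_space_imp_sigma_finite[OF prob_space_std_gaussian] by simp

lemma integral_gauss_family_monomial:
  "(\<integral>g. (\<Prod>e\<in>lower_idx N. g e ^ c e) \<partial>gauss_family N) = (\<Prod>e\<in>lower_idx N. gauss_moment (c e))"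
  unfolding gauss_family_def gauss_moment_def
  using std_gaussian_product.product_integral_prod[where I = "lower_idx N" and f = "\<lambda>e x. x ^ c e"]
    integrable_std_gaussian_power
  by simp

lemma integrable_gauss_family_monomial:
  "integrable (gauss_family N) (\<lambda>g. \<Prod>e\<in>lower_idx N. g e ^ c e)"
  unfolding gauss_family_def
  using std_gaussian_product.product_integrable_prod[where I = "lower_idx N" and f = "\<lambda>e x. x ^ c e"]
    integrable_std_gaussian_power
  by simp

lemma cycle_prod_sym_gauss_mat:
  assumes ys: "ys \<in> lists_of_length L N"
    and b_sym: "\<And>i j. i < N \<Longrightarrow> j < N \<Longrightarrow> b i j = b j i"
  shows "cycle_prod (\<lambda>i j. sym_gauss_mat N b g $$ (i, j)) ys
       = cycle_prod b ys * (\<Prod>e\<in>lower_idx N. g e ^ edge_mult ys e)"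
proof -
  have L: "length ys = L" using ys unfolding lists_of_length_def by simp
  have "cycle_prod (\<lambda>i j. sym_gauss_mat N b g $$ (i, j)) ys
      = (\<Prod>t<L. b (ys ! t) (ys ! (Suc t mod L)) * g (cycle_edge ys t))"
    unfolding cycle_prod_def L
  proof (rule prod.cong[OF refl])
    fix t assume "t \<in> {..<L}"
    then have "ys ! t < N" "ys ! (Suc t mod L) < N"
      using ys by (auto intro!: lists_of_length_nth Suc_mod_less)
    then show "sym_gauss_mat N b g $$ (ys ! t, ys ! (Suc t mod L))
        = b (ys ! t) (ys ! (Suc t mod L)) * g (cycle_edge ys t)"
      unfolding sym_gauss_mat_def cycle_edge_def lower_pair_def L
      using b_sym by (auto simp: max_def min_def)
  qed
  also have "\<dots> = cycle_prod b ys * (\<Prod>e\<in>cycle_edges ys. g e ^ edge_mult ys e)"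
    unfolding prod.distrib cycle_prod_def prod_cycle_edge[symmetric] L ..
  also have "(\<Prod>e\<in>cycle_edges ys. g e ^ edge_mult ys e) = (\<Prod>e\<in>lower_idx N. g e ^ edge_mult ys e)"
    using cycle_edges_subset_lower_idx[OF ys]
    by (intro prod_cycle_edges_extend) auto
  finally show ?thesis .
qed

theorem expected_trace_walk_sum:
  assumes L: "L \<ge> 1" and b_sym: "\<And>i j. i < N \<Longrightarrow> j < N \<Longrightarrow> b i j = b j i"
  shows "(\<integral>g. mtrace (sym_gauss_mat N b g ^\<^sub>m L) \<partial>gauss_family N)
       = (\<Sum>ys\<in>lists_of_length L N. cycle_prod b ys * walk_weight ys)"
proof -
  have "mtrace (sym_gauss_mat N b g ^\<^sub>m L)
      = (\<Sum>ys\<in>lists_of_length L N. cycle_prod b ys * (\<Prod>e\<in>lower_idx N. g e ^ edge_mult ys e))" for g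
  proof -
    have "sym_gauss_mat N b g \<in> carrier_mat N N" unfolding sym_gauss_mat_def by simp
    then show ?thesis
      by (simp add: mtrace_mat_pow_cycle_sum[OF _ L] cycle_prod_sym_gauss_mat[OF _ b_sym] cong: sum.cong)
  qed
  moreover have "(\<Prod>e\<in>lower_idx N. gauss_moment (edge_mult ys e)) = walk_weight ys"
    if "ys \<in> lists_of_length L N" for ys
    unfolding walk_weight_def
    using cycle_edges_subset_lower_idx[OF that]
    by (intro prod_cycle_edges_extend[symmetric]) auto
  ultimately show ?thesis
    by (simp add: integrable_gauss_family_monomial integral_gauss_family_monomial cong: sum.cong)
qed

section \<open>Shapes of walks\<close>

fun index_of :: "nat list \<Rightarrow> nat \<Rightarrow> nat" where
  "index_of [] x = 0"
| "index_of (y # ys) x = (if y = x then 0 else Suc (index_of ys x))"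

lemma index_of_less_length: "x \<in> set ds \<Longrightarrow> index_of ds x < length ds"
  by (induction ds) auto

lemma nth_index_of: "x \<in> set ds \<Longrightarrow> ds ! index_of ds x = x"
  by (induction ds) auto

lemma index_of_nth: "distinct ds \<Longrightarrow> i < length ds \<Longrightarrow> index_of ds (ds ! i) = i"
  by (induction ds arbitrary: i) (auto simp: nth_Cons')

text \<open>The vertices of a canonical list are numbered \<open>0, 1, 2, \<dots>\<close> in order of first appearance.\<close>

definition canonical :: "nat list \<Rightarrow> bool" where
  "canonical s \<longleftrightarrow> (\<forall>j \<le> length s. set (take j s) = {..<card (set (take j s))})"

lemma canonical_snoc:
  assumes "canonical s" "set s = {..<m}" "x \<le> m"
  shows "canonical (s @ [x])"
  unfolding canonical_def
proof (intro allI impI)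
  fix j assume j: "j \<le> length (s @ [x])"
  show "set (take j (s @ [x])) = {..<card (set (take j (s @ [x])))}"
  proof (cases "j \<le> length s")
    case True
    then have "take j (s @ [x]) = take j s" by simp
    moreover have "set (take j s) = {..<card (set (take j s))}"
      using assms(1) True unfolding canonical_def by blast
    ultimately show ?thesis by (simp only:)
  next
    case False
    with j have "take j (s @ [x]) = s @ [x]" by simp
    moreover have "set (s @ [x]) = insert x {..<m}" using assms(2) by simp
    moreover have "insert x {..<m} = (if x = m then {..<Suc m} else {..<m})"
      using assms(3) by (auto simp: lessThan_Suc)
    ultimately show ?thesis by simp
  qed
qed

text \<open>\<open>shape xs\<close> renames the entries of \<open>xs\<close> in order of first appearance, and \<open>labels xs\<close>
  lists the distinct entries in that order.\<close>

definition shape_step :: "nat list \<times> nat list \<Rightarrow> nat \<Rightarrow> nat list \<times> nat list" where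
  "shape_step sd x = (let (s, ds) = sd in
     if x \<in> set ds then (s @ [index_of ds x], ds) else (s @ [length ds], ds @ [x]))"

definition shape_and_labels :: "nat list \<Rightarrow> nat list \<times> nat list" where
  "shape_and_labels xs = foldl shape_step ([], []) xs"

definition shape :: "nat list \<Rightarrow> nat list" where
  "shape xs = fst (shape_and_labels xs)"

definition labels :: "nat list \<Rightarrow> nat list" where
  "labels xs = snd (shape_and_labels xs)"

lemma shape_and_labels_snoc: "shape_and_labels (xs @ [x]) = shape_step (shape_and_labels xs) x"
  unfolding shape_and_labels_def by simp

lemma shape_and_labels_invariant:
  "length (shape xs) = length xs \<and> distinct (labels xs) \<and> set (labels xs) = set xs \<and>
   map ((!) (labels xs)) (shape xs) = xs \<and> set (shape xs) = {..<length (labels xs)} \<and>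
   canonical (shape xs)"
proof (induction xs rule: rev_induct)
  case Nil
  then show ?case by (simp add: shape_def labels_def shape_and_labels_def canonical_def)
next
  case (snoc x xs)
  obtain s ds where sd: "shape_and_labels xs = (s, ds)" by force
  from snoc sd have IH: "length s = length xs" "distinct ds" "set ds = set xs"
    "map ((!) ds) s = xs" "set s = {..<length ds}" "canonical s"
    by (auto simp: shape_def labels_def)
  show ?case
  proof (cases "x \<in> set ds")
    case True
    have c: "shape_and_labels (xs @ [x]) = (s @ [index_of ds x], ds)"
      using True by (simp add: shape_and_labels_snoc sd shape_step_def)
    have i: "index_of ds x < length ds" using True by (rule index_of_less_length)
    have "set (s @ [index_of ds x]) = {..<length ds}" using IH(5) i by (simp add: insert_absorb)
    moreover have "map ((!) ds) (s @ [index_of ds x]) = xs @ [x]"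
      using IH(4) True by (simp add: nth_index_of)
    moreover have "canonical (s @ [index_of ds x])"
      using canonical_snoc[OF IH(6,5)] i by simp
    moreover have "set ds = set (xs @ [x])" using IH(3) True by (simp add: insert_absorb)
    ultimately show ?thesis
      unfolding shape_def labels_def c using IH(1,2) by simp
  next
    case False
    have c: "shape_and_labels (xs @ [x]) = (s @ [length ds], ds @ [x])"
      using False by (simp add: shape_and_labels_snoc sd shape_step_def)
    have "map ((!) (ds @ [x])) s = map ((!) ds) s"
      using IH(5) by (intro map_cong) (simp_all add: nth_append)
    then have "map ((!) (ds @ [x])) (s @ [length ds]) = xs @ [x]"
      using IH(4) by simp
    moreover have "set (s @ [length ds]) = {..<length (ds @ [x])}"
      using IH(5) by (simp add: lessThan_Suc)
    moreover have "canonical (s @ [length ds])"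
      using canonical_snoc[OF IH(6,5)] by simp
    ultimately show ?thesis
      unfolding shape_def labels_def c using IH(1,2,3) False by simp
  qed
qed

lemma length_shape [simp]: "length (shape xs) = length xs"
  and distinct_labels: "distinct (labels xs)"
  and set_labels: "set (labels xs) = set xs"
  and map_labels_shape: "map ((!) (labels xs)) (shape xs) = xs"
  and set_shape: "set (shape xs) = {..<length (labels xs)}"
  and canonical_shape: "canonical (shape xs)"
  using shape_and_labels_invariant[of xs] by simp_all

lemma length_labels: "length (labels xs) = card (set (shape xs))"
  by (simp add: set_shape)

lemma shape_and_labels_relabel:
  assumes "distinct ds" "length ds = length (labels ys)"
  shows "shape_and_labels (map ((!) ds) (shape ys)) = (shape ys, ds)"
  using assms
proof (induction ys arbitrary: ds rule: rev_induct)
  case Nil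
  then show ?case by (simp add: shape_def labels_def shape_and_labels_def)
next
  case (snoc y ys)
  obtain s ls where sd: "shape_and_labels ys = (s, ls)" by force
  have s: "shape ys = s" and ls: "labels ys = ls" using sd by (simp_all add: shape_def labels_def)
  have set_s: "set s = {..<length ls}" using set_shape[of ys] s ls by simp
  show ?case
  proof (cases "y \<in> set ls")
    case True
    let ?i = "index_of ls y"
    have c: "shape_and_labels (ys @ [y]) = (s @ [?i], ls)"
      using True by (simp add: shape_and_labels_snoc sd shape_step_def)
    have len: "length ds = length ls" using snoc.prems c by (simp add: labels_def)
    have i: "?i < length ds" using index_of_less_length[OF True] len by simp
    have "shape_and_labels (map ((!) ds) (s @ [?i])) = shape_step (s, ds) (ds ! ?i)"
      using snoc.IH[of ds] snoc.prems(1) len s ls by (simp add: shape_and_labels_snoc)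
    also have "\<dots> = (s @ [?i], ds)"
      using i index_of_nth[OF snoc.prems(1) i] by (simp add: shape_step_def)
    finally show ?thesis using c by (simp add: shape_def)
  next
    case False
    have c: "shape_and_labels (ys @ [y]) = (s @ [length ls], ls @ [y])"
      using False by (simp add: shape_and_labels_snoc sd shape_step_def)
    have len: "length ds = Suc (length ls)" using snoc.prems c by (simp add: labels_def)
    then obtain d0 z where ds: "ds = d0 @ [z]"
      by (metis append_butlast_last_id length_greater_0_conv zero_less_Suc)
    have d0: "distinct d0" "length d0 = length ls" "z \<notin> set d0"
      using snoc.prems(1) len ds by auto
    have "map ((!) ds) s = map ((!) d0) s"
      using set_s d0(2) by (intro map_cong) (simp_all add: ds nth_append)
    then have "map ((!) ds) (s @ [length ls]) = map ((!) d0) s @ [z]"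
      using d0(2) by (simp add: ds nth_append)
    moreover have "shape_and_labels (map ((!) d0) s) = (s, d0)"
      using snoc.IH[of d0] d0 s ls by simp
    ultimately have "shape_and_labels (map ((!) ds) (s @ [length ls])) = shape_step (s, d0) z"
      by (simp only: shape_and_labels_snoc)
    also have "\<dots> = (s @ [length ls], ds)"
      using d0 ds by (simp add: shape_step_def)
    finally show ?thesis using c by (simp add: shape_def)
  qed
qed

definition shapes :: "nat \<Rightarrow> nat list set" where
  "shapes L = shape ` {xs. length xs = L}"

lemma finite_shapes [simp]: "finite (shapes L)"
proof (rule finite_subset[OF _ finite_lists_of_length])
  show "shapes L \<subseteq> lists_of_length L L"
  proof
    fix s assume "s \<in> shapes L"
    then obtain xs where xs: "s = shape xs" "length xs = L" unfolding shapes_def by blast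
    have "length (labels xs) = card (set xs)"
      using distinct_card[OF distinct_labels] set_labels by metis
    also have "\<dots> \<le> L" using card_length[of xs] xs(2) by simp
    finally show "s \<in> lists_of_length L L"
      using xs set_shape[of xs] by (auto simp: lists_of_length_def)
  qed
qed

definition distinct_lists :: "nat \<Rightarrow> nat \<Rightarrow> nat list set" where
  "distinct_lists k N = {ds. length ds = k \<and> distinct ds \<and> set ds \<subseteq> {..<N}}"

lemma finite_distinct_lists [simp]: "finite (distinct_lists k N)"
  by (rule finite_subset[OF _ finite_lists_of_length[of k N]])
    (auto simp: distinct_lists_def lists_of_length_def)

lemma sum_lists_of_length_by_shape:
  "(\<Sum>xs\<in>lists_of_length L N. f xs)
     = (\<Sum>s\<in>shapes L. \<Sum>ds\<in>distinct_lists (card (set s)) N. f (map ((!) ds) s))"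
proof -
  let ?S = "Sigma (shapes L) (\<lambda>s. distinct_lists (card (set s)) N)"
  have "(\<Sum>xs\<in>lists_of_length L N. f xs) = (\<Sum>(s, ds)\<in>?S. f (map ((!) ds) s))"
  proof (rule sum.reindex_bij_witness[of _ "\<lambda>(s, ds). map ((!) ds) s" "\<lambda>xs. (shape xs, labels xs)"])
    fix a assume "a \<in> ?S"
    then obtain ys ds where a: "a = (shape ys, ds)" and ys: "length ys = L"
      and ds: "ds \<in> distinct_lists (card (set (shape ys))) N"
      unfolding shapes_def by auto
    have d: "distinct ds" "length ds = length (labels ys)"
      using ds length_labels[of ys] by (auto simp: distinct_lists_def)
    show "(\<lambda>xs. (shape xs, labels xs)) ((\<lambda>(s, ds). map ((!) ds) s) a) = a"
      using shape_and_labels_relabel[OF d] a by (simp add: shape_def labels_def)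
    have "set (shape ys) \<subseteq> {..<length ds}" using set_shape[of ys] d(2) by simp
    then have "set (map ((!) ds) (shape ys)) \<subseteq> set ds" by auto
    then show "(\<lambda>(s, ds). map ((!) ds) s) a \<in> lists_of_length L N"
      using a ys ds by (auto simp: lists_of_length_def distinct_lists_def)
  next
    fix xs assume xs: "xs \<in> lists_of_length L N"
    show "(\<lambda>(s, ds). map ((!) ds) s) (shape xs, labels xs) = xs"
      by (simp add: map_labels_shape)
    show "(shape xs, labels xs) \<in> ?S"
      using xs distinct_labels[of xs] set_labels[of xs] length_labels[of xs]
      by (auto simp: shapes_def lists_of_length_def distinct_lists_def)
  qed (simp add: map_labels_shape)
  also have "\<dots> = (\<Sum>s\<in>shapes L. \<Sum>ds\<in>distinct_lists (card (set s)) N. f (map ((!) ds) s))"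
    by (rule sum.Sigma[symmetric]) auto
  finally show ?thesis .
qed

lemma set_shape_eq_lessThan: "s \<in> shapes L \<Longrightarrow> set s = {..<card (set s)}"
  unfolding shapes_def using set_shape length_labels by (metis imageE)

theorem expected_trace_shape_sum:
  assumes L: "L \<ge> 1" and b_sym: "\<And>i j. i < N \<Longrightarrow> j < N \<Longrightarrow> b i j = b j i"
  shows "(\<integral>g. mtrace (sym_gauss_mat N b g ^\<^sub>m L) \<partial>gauss_family N)
       = (\<Sum>s\<in>shapes L. walk_weight s *
            (\<Sum>ds\<in>distinct_lists (card (set s)) N. cycle_prod b (map ((!) ds) s)))"
proof -
  have weight: "walk_weight (map ((!) ds) s) = walk_weight s"
    if "s \<in> shapes L" "ds \<in> distinct_lists (card (set s)) N" for s ds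
    using that set_shape_eq_lessThan[OF that(1)]
    by (intro walk_weight_map inj_on_nth) (auto simp: distinct_lists_def)
  have "(\<integral>g. mtrace (sym_gauss_mat N b g ^\<^sub>m L) \<partial>gauss_family N)
      = (\<Sum>s\<in>shapes L. \<Sum>ds\<in>distinct_lists (card (set s)) N.
           cycle_prod b (map ((!) ds) s) * walk_weight (map ((!) ds) s))"
    by (simp only: expected_trace_walk_sum[OF L b_sym] sum_lists_of_length_by_shape)
  also have "\<dots> = (\<Sum>s\<in>shapes L. walk_weight s *
            (\<Sum>ds\<in>distinct_lists (card (set s)) N. cycle_prod b (map ((!) ds) s)))"
    unfolding sum_distrib_left by (intro sum.cong refl) (simp add: weight mult.commute)
  finally show ?thesis .
qed

section \<open>The spanning tree of first visits\<close>

lemma nth_mem_take: "i < n \<Longrightarrow> i < length s \<Longrightarrow> s ! i \<in> set (take n s)"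
  using nth_mem[of i "take n s"] by simp

lemma canonical_hd:
  assumes "canonical s" "s \<noteq> []"
  shows "s ! 0 = 0"
proof -
  have "take 1 s = [s ! 0]" using assms(2) by (cases s) auto
  moreover have "set (take 1 s) = {..<card (set (take 1 s))}"
    using assms unfolding canonical_def by (simp add: Suc_leI)
  ultimately show ?thesis by auto
qed

lemma canonical_new_greater:
  assumes can: "canonical s" and k: "k < length s" and new: "s ! k \<notin> set (take k s)"
    and y: "y \<in> set (take k s)"
  shows "y < s ! k"
proof -
  define A where "A = set (take k s)"
  have A: "A = {..<card A}" using can k unfolding canonical_def A_def by simp
  have "set (take (Suc k) s) = insert (s ! k) A"
    unfolding A_def using k by (simp add: take_Suc_conv_app_nth)
  moreover have "set (take (Suc k) s) = {..<card (set (take (Suc k) s))}"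
    using can k unfolding canonical_def by simp
  moreover have "card (insert (s ! k) A) = Suc (card A)"
    using new unfolding A_def by simp
  ultimately have "insert (s ! k) A = {..<Suc (card A)}" by simp
  then have "s ! k = card A"
    using new A unfolding A_def[symmetric] by (metis insertI1 lessThan_iff less_SucE)
  then show ?thesis using y A unfolding A_def[symmetric] by (metis lessThan_iff)
qed

text \<open>The steps that enter a vertex for the first time; their edges form a spanning tree.\<close>

definition tree_steps :: "nat list \<Rightarrow> nat set" where
  "tree_steps s = {k. Suc k < length s \<and> s ! Suc k \<notin> set (take (Suc k) s)}"

lemma tree_steps_subset: "tree_steps s \<subseteq> {..<length s}"
  unfolding tree_steps_def by auto

lemma finite_tree_steps [simp]: "finite (tree_steps s)"
  using tree_steps_subset finite_subset by blast

lemma cycle_edge_tree_step: "k \<in> tree_steps s \<Longrightarrow> cycle_edge s k = lower_pair (s ! k) (s ! Suc k)"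
  unfolding tree_steps_def cycle_edge_def by simp

lemma inj_on_cycle_edge_tree_steps: "inj_on (cycle_edge s) (tree_steps s)"
proof -
  have False if k1: "k1 \<in> tree_steps s" and k2: "k2 \<in> tree_steps s"
    and e: "cycle_edge s k1 = cycle_edge s k2" and lt: "k1 < k2" for k1 k2
  proof -
    have "s ! Suc k2 = s ! k1 \<or> s ! Suc k2 = s ! Suc k1"
      using e cycle_edge_tree_step[OF k1] cycle_edge_tree_step[OF k2] lower_pair_eq_iff by metis
    moreover have "s ! k1 \<in> set (take (Suc k2) s)" "s ! Suc k1 \<in> set (take (Suc k2) s)"
      using lt k2 unfolding tree_steps_def by (auto intro: nth_mem_take)
    ultimately show False using k2 unfolding tree_steps_def by auto
  qed
  then show ?thesis by (metis inj_onI linorder_neqE_nat)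
qed

definition first_index :: "nat list \<Rightarrow> nat \<Rightarrow> nat" where
  "first_index s j = (LEAST i. i < length s \<and> s ! i = j)"

definition parent :: "nat list \<Rightarrow> nat \<Rightarrow> nat" where
  "parent s j = s ! (first_index s j - 1)"

lemma first_index_tree_step:
  assumes k: "k \<in> tree_steps s"
  shows "first_index s (s ! Suc k) = Suc k"
  unfolding first_index_def
proof (rule Least_equality)
  show "Suc k < length s \<and> s ! Suc k = s ! Suc k" using k unfolding tree_steps_def by simp
next
  fix i assume i: "i < length s \<and> s ! i = s ! Suc k"
  show "Suc k \<le> i"
  proof (rule ccontr)
    assume "\<not> Suc k \<le> i"
    then have "s ! i \<in> set (take (Suc k) s)" using i by (intro nth_mem_take) auto
    then show False using i k unfolding tree_steps_def by simp
  qed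
qed

lemma parent_tree_step: "k \<in> tree_steps s \<Longrightarrow> parent s (s ! Suc k) = s ! k"
  unfolding parent_def by (simp add: first_index_tree_step)

lemma bij_betw_tree_steps:
  assumes can: "canonical s" and ne: "s \<noteq> []" and set_s: "set s = {..<m}"
  shows "bij_betw (\<lambda>k. s ! Suc k) (tree_steps s) {1..<m}"
proof (rule bij_betw_imageI)
  show "inj_on (\<lambda>k. s ! Suc k) (tree_steps s)"
  proof (rule inj_onI)
    fix k1 k2 assume "k1 \<in> tree_steps s" "k2 \<in> tree_steps s" "s ! Suc k1 = s ! Suc k2"
    then have "Suc k1 = Suc k2" by (metis first_index_tree_step)
    then show "k1 = k2" by simp
  qed
  show "(\<lambda>k. s ! Suc k) ` tree_steps s = {1..<m}"
  proof (intro equalityI subsetI)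
    fix j assume "j \<in> (\<lambda>k. s ! Suc k) ` tree_steps s"
    then obtain k where k: "k \<in> tree_steps s" and j: "j = s ! Suc k" by blast
    have k_less: "Suc k < length s" and new: "j \<notin> set (take (Suc k) s)"
      using k j unfolding tree_steps_def by auto
    have "j \<in> set s" using k_less j by simp
    then have "j < m" using set_s by simp
    moreover have "0 \<in> set (take (Suc k) s)"
      using nth_mem_take[of 0 "Suc k" s] canonical_hd[OF can ne] ne by simp
    then have "j \<noteq> 0" using new by metis
    ultimately show "j \<in> {1..<m}" by simp
  next
    fix j assume j: "j \<in> {1..<m}"
    then have "j \<in> set s" using set_s by simp
    then have "\<exists>i. i < length s \<and> s ! i = j" by (simp add: in_set_conv_nth)
    then have first: "first_index s j < length s \<and> s ! first_index s j = j"
      unfolding first_index_def by (rule LeastI_ex)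
    have minimal: "first_index s j \<le> i" if "i < length s" "s ! i = j" for i
      unfolding first_index_def using that by (simp add: Least_le)
    have "first_index s j \<noteq> 0" using first j canonical_hd[OF can ne] by (metis atLeastLessThan_iff not_one_le_zero)
    then obtain k where k: "first_index s j = Suc k" using not0_implies_Suc by blast
    have "s ! Suc k \<notin> set (take (Suc k) s)"
    proof
      assume "s ! Suc k \<in> set (take (Suc k) s)"
      then obtain i where "i < Suc k" "s ! i = j" using first k by (auto simp: in_set_conv_nth)
      then show False using minimal[of i] first k by linarith
    qed
    then have "k \<in> tree_steps s" unfolding tree_steps_def using first k by simp
    then show "j \<in> (\<lambda>k. s ! Suc k) ` tree_steps s" using first k by (metis image_eqI)
  qed
qed

lemma card_tree_steps:
  "canonical s \<Longrightarrow> s \<noteq> [] \<Longrightarrow> set s = {..<m} \<Longrightarrow> card (tree_steps s) = m - 1"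
  using bij_betw_same_card[OF bij_betw_tree_steps] by simp

lemma parent_less:
  assumes can: "canonical s" and ne: "s \<noteq> []" and set_s: "set s = {..<m}" and j: "j \<in> {1..<m}"
  shows "parent s j < j"
proof -
  obtain k where k: "k \<in> tree_steps s" and j: "j = s ! Suc k"
    using bij_betw_tree_steps[OF can ne set_s] j unfolding bij_betw_def by blast
  have "Suc k < length s" "s ! Suc k \<notin> set (take (Suc k) s)"
    using k unfolding tree_steps_def by auto
  moreover have "s ! k \<in> set (take (Suc k) s)" using calculation by (intro nth_mem_take) auto
  ultimately have "s ! k < s ! Suc k" by (rule canonical_new_greater[OF can])
  then show ?thesis using k j parent_tree_step by simp
qed

lemma prod_tree_steps_parent:
  assumes "canonical s" "s \<noteq> []" "set s = {..<m}"
  shows "(\<Prod>k\<in>tree_steps s. h (s ! k) (s ! Suc k)) = (\<Prod>j\<in>{1..<m}. h (parent s j) j)"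
  using prod.reindex_bij_betw[OF bij_betw_tree_steps[OF assms], of "\<lambda>j. h (parent s j) j"]
  by (simp add: parent_tree_step cong: prod.cong)

lemma even_walk_vertex_bound:
  assumes can: "canonical s" and ne: "s \<noteq> []" and set_s: "set s = {..<m}" and ev: "even_walk s"
  shows "2 * (m - 1) \<le> length s"
proof -
  have "m - 1 = card (cycle_edge s ` tree_steps s)"
    using card_tree_steps[OF can ne set_s] inj_on_cycle_edge_tree_steps by (simp add: card_image)
  also have "\<dots> \<le> card (cycle_edges s)"
    unfolding cycle_edges_def using tree_steps_subset by (intro card_mono image_mono) auto
  finally have "2 * (m - 1) \<le> (\<Sum>e\<in>cycle_edges s. 2)" by simp
  also have "\<dots> \<le> (\<Sum>e\<in>cycle_edges s. edge_mult s e)"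
    using ev unfolding cycle_edges_def by (intro sum_mono) (auto intro: even_walk_edge_mult_ge_2)
  also have "\<dots> = length s" by (rule sum_edge_mult)
  finally show ?thesis .
qed

lemma prod_le_prod_subset_if_bounded_by_1:
  fixes f :: "'a \<Rightarrow> 'b :: linordered_idom"
  assumes "finite B" "A \<subseteq> B" "\<And>x. x \<in> B \<Longrightarrow> 0 \<le> f x \<and> f x \<le> 1"
  shows "prod f B \<le> prod f A"
proof -
  have "prod f B = prod f A * prod f (B - A)"
    using assms by (metis prod.subset_diff mult.commute)
  also have "\<dots> \<le> prod f A"
    using assms by (intro mult_left_le prod_le_1 prod_nonneg) (auto intro: finite_subset)
  finally show ?thesis .
qed

lemma even_walk_cycle_prod_le:
  fixes c :: "nat \<Rightarrow> 'a :: linordered_field"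
  assumes ev: "even_walk s"
    and c_le_1: "\<And>t. t < length s \<Longrightarrow> \<bar>c t\<bar> \<le> 1"
    and c_edge: "\<And>t t'. t < length s \<Longrightarrow> t' < length s \<Longrightarrow> cycle_edge s t = cycle_edge s t' \<Longrightarrow> c t = c t'"
  shows "(\<Prod>t<length s. c t) \<le> (\<Prod>k\<in>tree_steps s. (c k)\<^sup>2)"
proof -
  let ?T = "tree_steps s"
  txt \<open>The edges of tree steps are distinct and traversed at least twice, so each tree step has a
    twin step on the same edge; the remaining factors are bounded by 1.\<close>
  have "\<exists>k'. k' < length s \<and> k' \<noteq> k \<and> cycle_edge s k' = cycle_edge s k" if k: "k \<in> ?T" for k
  proof (rule ccontr)
    assume "\<nexists>k'. k' < length s \<and> k' \<noteq> k \<and> cycle_edge s k' = cycle_edge s k"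
    then have "edge_mult s (cycle_edge s k) \<le> card {k}"
      unfolding edge_mult_def by (intro card_mono) auto
    moreover have "k < length s" using k tree_steps_subset by auto
    ultimately show False using even_walk_edge_mult_ge_2[OF ev] by fastforce
  qed
  then obtain twin where twin: "\<And>k. k \<in> ?T \<Longrightarrow>
      twin k < length s \<and> twin k \<noteq> k \<and> cycle_edge s (twin k) = cycle_edge s k"
    by metis
  have twin_not_tree: "twin k \<notin> ?T" if "k \<in> ?T" for k
    using twin[OF that] inj_onD[OF inj_on_cycle_edge_tree_steps _ _ that] by blast
  have inj_twin: "inj_on twin ?T"
  proof (rule inj_onI)
    fix k1 k2 assume "k1 \<in> ?T" "k2 \<in> ?T" "twin k1 = twin k2"
    then show "k1 = k2" using twin inj_onD[OF inj_on_cycle_edge_tree_steps] by metis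
  qed
  have "(\<Prod>t<length s. c t) \<le> (\<Prod>t<length s. \<bar>c t\<bar>)"
    using abs_ge_self[of "\<Prod>t<length s. c t"] by (simp add: abs_prod)
  also have "\<dots> \<le> (\<Prod>t\<in>?T \<union> twin ` ?T. \<bar>c t\<bar>)"
    using tree_steps_subset twin c_le_1
    by (intro prod_le_prod_subset_if_bounded_by_1) auto
  also have "\<dots> = (\<Prod>t\<in>?T. \<bar>c t\<bar>) * (\<Prod>t\<in>twin ` ?T. \<bar>c t\<bar>)"
    using twin_not_tree by (intro prod.union_disjoint) auto
  also have "(\<Prod>t\<in>twin ` ?T. \<bar>c t\<bar>) = (\<Prod>t\<in>?T. \<bar>c (twin t)\<bar>)"
    by (rule prod.reindex[OF inj_twin, unfolded comp_def])
  also have "\<dots> = (\<Prod>t\<in>?T. \<bar>c t\<bar>)"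
  proof (rule prod.cong[OF refl])
    fix k assume k: "k \<in> ?T"
    then have "k < length s" using tree_steps_subset by auto
    then show "\<bar>c (twin k)\<bar> = \<bar>c k\<bar>" using twin[OF k] c_edge by metis
  qed
  also have "(\<Prod>t\<in>?T. \<bar>c t\<bar>) * (\<Prod>t\<in>?T. \<bar>c t\<bar>) = (\<Prod>k\<in>?T. (c k)\<^sup>2)"
    by (simp add: prod.distrib[symmetric] power2_eq_square flip: abs_mult)
  finally show ?thesis .
qed

section \<open>Summing over labellings\<close>

lemma sum_tree_labellings_le:
  fixes b :: "nat \<Rightarrow> nat \<Rightarrow> real" and pa :: "nat \<Rightarrow> nat"
  assumes pa: "\<And>j. 1 \<le> j \<Longrightarrow> j < m \<Longrightarrow> pa j < j"
    and rows: "\<And>x. x < n \<Longrightarrow> (\<Sum>y<n. (b x y)\<^sup>2) \<le> \<sigma>\<^sup>2"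
    and n: "n \<ge> 1"
  shows "(\<Sum>ds\<in>lists_of_length m n. \<Prod>j\<in>{1..<m}. (b (ds ! pa j) (ds ! j))\<^sup>2) \<le> real n * \<sigma> ^ (2 * (m - 1))"
  using pa
proof (induction m)
  case 0
  then show ?case using n by (simp add: lists_of_length_0)
next
  case (Suc m)
  let ?P = "\<lambda>m ds. \<Prod>j\<in>{1..<m}. (b (ds ! pa j) (ds ! j))\<^sup>2"
  show ?case
  proof (cases "m = 0")
    case True
    then show ?thesis
      using sum_lists_of_length_Suc_snoc[of "\<lambda>_. 1 :: real" 0 n] by (simp add: lists_of_length_0)
  next
    case False
    have IH: "(\<Sum>ds\<in>lists_of_length m n. ?P m ds) \<le> real n * \<sigma> ^ (2 * (m - 1))"
      using Suc by simp
    have pa_m: "pa m < m" using Suc.prems False by simp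
    have snoc: "?P (Suc m) (ds @ [x]) = ?P m ds * (b (ds ! pa m) x)\<^sup>2"
      if ds: "ds \<in> lists_of_length m n" for ds x
    proof -
      have len: "length ds = m" using ds unfolding lists_of_length_def by simp
      have "?P (Suc m) (ds @ [x]) = ?P m (ds @ [x]) * (b ((ds @ [x]) ! pa m) ((ds @ [x]) ! m))\<^sup>2"
        using False by (simp add: atLeastLessThanSuc mult.commute)
      also have "?P m (ds @ [x]) = ?P m ds"
      proof (intro prod.cong refl)
        fix j assume "j \<in> {1..<m}"
        then have "pa j < m" "j < m" using Suc.prems by fastforce+
        then show "(b ((ds @ [x]) ! pa j) ((ds @ [x]) ! j))\<^sup>2 = (b (ds ! pa j) (ds ! j))\<^sup>2"
          using len by (simp add: nth_append)
      qed
      finally show ?thesis using pa_m len by (simp add: nth_append)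
    qed
    txt \<open>Vertex \<open>m\<close> is a leaf; summing it out leaves a row sum of squares.\<close>
    have "(\<Sum>ds\<in>lists_of_length (Suc m) n. ?P (Suc m) ds)
        = (\<Sum>ds\<in>lists_of_length m n. ?P m ds * (\<Sum>x<n. (b (ds ! pa m) x)\<^sup>2))"
      unfolding sum_lists_of_length_Suc_snoc by (intro sum.cong refl) (simp only: snoc sum_distrib_left)
    also have "\<dots> \<le> (\<Sum>ds\<in>lists_of_length m n. ?P m ds * \<sigma>\<^sup>2)"
      using pa_m by (intro sum_mono mult_left_mono rows prod_nonneg) (auto intro: lists_of_length_nth)
    also have "\<dots> \<le> real n * \<sigma> ^ (2 * (m - 1)) * \<sigma>\<^sup>2"
      using IH by (simp add: sum_distrib_right[symmetric] mult_right_mono)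
    also have "\<dots> = real n * \<sigma> ^ (2 * (Suc m - 1))"
      using False by (cases m) (auto simp: power_add power2_eq_square mult_ac)
    finally show ?thesis .
  qed
qed

lemma cycle_prod_relabel_le_tree_prod:
  fixes b :: "nat \<Rightarrow> nat \<Rightarrow> real"
  assumes can: "canonical s" and ne: "s \<noteq> []" and set_s: "set s = {..<m}" and ev: "even_walk s"
    and b_le_1: "\<And>i j. i < n \<Longrightarrow> j < n \<Longrightarrow> \<bar>b i j\<bar> \<le> 1"
    and b_sym: "\<And>i j. i < n \<Longrightarrow> j < n \<Longrightarrow> b i j = b j i"
    and ds: "ds \<in> lists_of_length m n"
  shows "cycle_prod b (map ((!) ds) s) \<le> (\<Prod>j\<in>{1..<m}. (b (ds ! parent s j) (ds ! j))\<^sup>2)"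
proof -
  let ?L = "length s"
  define c where "c t = b (ds ! (s ! t)) (ds ! (s ! (Suc t mod ?L)))" for t
  have ds_n: "ds ! (s ! t) < n" if "t < ?L" for t
  proof -
    have "s ! t < m" using that set_s by (metis lessThan_iff nth_mem)
    then show ?thesis by (rule lists_of_length_nth[OF ds])
  qed
  have c_edge: "c t = b (ds ! fst (cycle_edge s t)) (ds ! snd (cycle_edge s t))" if t: "t < ?L" for t
    using b_sym[OF ds_n[OF t] ds_n[OF Suc_mod_less[OF t]]]
    unfolding c_def cycle_edge_def lower_pair_def by (auto simp: max_def min_def)
  have "cycle_prod b (map ((!) ds) s) = (\<Prod>t<?L. c t)"
    unfolding cycle_prod_def c_def
  proof (intro prod.cong)
    fix t assume "t \<in> {..<?L}"
    then have "t < ?L" "Suc t mod ?L < ?L" by (simp_all add: Suc_mod_less)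
    then show "b (map ((!) ds) s ! t) (map ((!) ds) s ! (Suc t mod length (map ((!) ds) s)))
        = b (ds ! (s ! t)) (ds ! (s ! (Suc t mod ?L)))" by simp
  qed simp
  also have "\<dots> \<le> (\<Prod>k\<in>tree_steps s. (c k)\<^sup>2)"
  proof (rule even_walk_cycle_prod_le[OF ev])
    show "\<bar>c t\<bar> \<le> 1" if "t < ?L" for t
      unfolding c_def using that by (intro b_le_1 ds_n Suc_mod_less)
    show "c t = c t'" if "t < ?L" "t' < ?L" "cycle_edge s t = cycle_edge s t'" for t t'
      using that by (simp add: c_edge)
  qed
  also have "\<dots> = (\<Prod>k\<in>tree_steps s. (b (ds ! (s ! k)) (ds ! (s ! Suc k)))\<^sup>2)"
    unfolding c_def by (intro prod.cong refl) (simp add: tree_steps_def)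
  also have "\<dots> = (\<Prod>j\<in>{1..<m}. (b (ds ! parent s j) (ds ! j))\<^sup>2)"
    by (rule prod_tree_steps_parent[OF can ne set_s])
  finally show ?thesis .
qed

lemma sum_distinct_labellings_cycle_prod_le:
  fixes b :: "nat \<Rightarrow> nat \<Rightarrow> real"
  assumes can: "canonical s" and ne: "s \<noteq> []" and set_s: "set s = {..<m}" and ev: "even_walk s"
    and b_le_1: "\<And>i j. i < n \<Longrightarrow> j < n \<Longrightarrow> \<bar>b i j\<bar> \<le> 1"
    and b_sym: "\<And>i j. i < n \<Longrightarrow> j < n \<Longrightarrow> b i j = b j i"
    and rows: "\<And>x. x < n \<Longrightarrow> (\<Sum>y<n. (b x y)\<^sup>2) \<le> \<sigma>\<^sup>2"
    and n: "n \<ge> 1"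
  shows "(\<Sum>ds\<in>distinct_lists m n. cycle_prod b (map ((!) ds) s)) \<le> real n * \<sigma> ^ (2 * (m - 1))"
proof -
  let ?P = "\<lambda>ds. \<Prod>j\<in>{1..<m}. (b (ds ! parent s j) (ds ! j))\<^sup>2"
  have sub: "distinct_lists m n \<subseteq> lists_of_length m n"
    unfolding distinct_lists_def lists_of_length_def by auto
  have "(\<Sum>ds\<in>distinct_lists m n. cycle_prod b (map ((!) ds) s)) \<le> (\<Sum>ds\<in>distinct_lists m n. ?P ds)"
    using sub by (intro sum_mono cycle_prod_relabel_le_tree_prod[OF can ne set_s ev b_le_1 b_sym]) auto
  also have "\<dots> \<le> (\<Sum>ds\<in>lists_of_length m n. ?P ds)"
    using sub by (intro sum_mono2) (auto intro: prod_nonneg)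
  also have "\<dots> \<le> real n * \<sigma> ^ (2 * (m - 1))"
    using parent_less[OF can ne set_s] by (intro sum_tree_labellings_le[OF _ rows n]) auto
  finally show ?thesis .
qed

lemma card_distinct_lists_ge:
  fixes x :: real
  assumes x: "0 \<le> x" "x \<le> real c" and m: "1 \<le> m" "m \<le> p + 1" and p: "p \<ge> 1"
  shows "real (c + p) * x ^ (m - 1) \<le> real (card (distinct_lists m (c + p)))"
proof (cases "m \<le> c + p")
  case False
  then have "c = 0" "m - 1 \<noteq> 0" using m p by linarith+
  then show ?thesis using x by (simp add: power_0_left)
next
  case True
  let ?r = "c + p"
  have "card (distinct_lists m ?r) = \<Prod>{?r - m + 1 .. ?r}"
    unfolding distinct_lists_def using card_lists_distinct_length_eq[of "{..<?r}" m] True by simp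
  also have "{?r - m + 1 .. ?r} = insert ?r {?r - m + 1 ..< ?r}" using m True by auto
  finally have card: "real (card (distinct_lists m ?r)) = real ?r * (\<Prod>i\<in>{?r - m + 1 ..< ?r}. real i)"
    by simp
  have "x ^ (m - 1) = (\<Prod>i\<in>{?r - m + 1 ..< ?r}. x)" using m True by simp
  also have "\<dots> \<le> (\<Prod>i\<in>{?r - m + 1 ..< ?r}. real i)"
    using x m by (intro prod_mono) auto
  finally show ?thesis unfolding card by (simp add: mult_left_mono)
qed

lemma sum_shape_labellings_le:
  fixes b :: "nat \<Rightarrow> nat \<Rightarrow> real"
  assumes s: "s \<in> shapes (2 * p)" and ev: "even_walk s"
    and b_le_1: "\<And>i j. i < n \<Longrightarrow> j < n \<Longrightarrow> \<bar>b i j\<bar> \<le> 1"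
    and b_sym: "\<And>i j. i < n \<Longrightarrow> j < n \<Longrightarrow> b i j = b j i"
    and rows: "\<And>x. x < n \<Longrightarrow> (\<Sum>y<n. (b x y)\<^sup>2) \<le> \<sigma>\<^sup>2"
    and n: "n \<ge> 1" and p: "p \<ge> 1"
  defines "r \<equiv> nat \<lceil>\<sigma>\<^sup>2\<rceil> + p"
  shows "(\<Sum>ds\<in>distinct_lists (card (set s)) n. cycle_prod b (map ((!) ds) s))
       \<le> real n / real r * real (card (distinct_lists (card (set s)) r))"
proof -
  define m where "m = card (set s)"
  obtain xs where xs: "s = shape xs" "length xs = 2 * p" using s unfolding shapes_def by blast
  have can: "canonical s" using xs canonical_shape by simp
  have "length s = 2 * p" using xs by simp
  then have ne: "s \<noteq> []" using p by auto
  have set_s: "set s = {..<m}" using set_shape_eq_lessThan[OF s] unfolding m_def .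
  have "m \<noteq> 0" using ne set_s by (metis lessThan_0 set_empty)
  moreover have "2 * (m - 1) \<le> 2 * p" using even_walk_vertex_bound[OF can ne set_s ev] xs by simp
  ultimately have card_ge: "real r * (\<sigma>\<^sup>2) ^ (m - 1) \<le> real (card (distinct_lists m r))"
    unfolding r_def using p real_nat_ceiling_ge[of "\<sigma>\<^sup>2"]
    by (intro card_distinct_lists_ge) auto
  have "r > 0" unfolding r_def using p by simp
  have "(\<Sum>ds\<in>distinct_lists m n. cycle_prod b (map ((!) ds) s)) \<le> real n * \<sigma> ^ (2 * (m - 1))"
    by (rule sum_distinct_labellings_cycle_prod_le[OF can ne set_s ev b_le_1 b_sym rows n])
  also have "\<dots> = real n / real r * (real r * (\<sigma>\<^sup>2) ^ (m - 1))"
    using \<open>r > 0\<close> by (simp add: power_mult)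
  also have "\<dots> \<le> real n / real r * real (card (distinct_lists m r))"
    using card_ge by (intro mult_left_mono) auto
  finally show ?thesis unfolding m_def .
qed

lemma sum_weighted_le:
  fixes w f g :: "'a \<Rightarrow> real"
  assumes "\<And>x. x \<in> S \<Longrightarrow> 0 \<le> w x" and "\<And>x. x \<in> S \<Longrightarrow> w x \<noteq> 0 \<Longrightarrow> f x \<le> c * g x"
  shows "(\<Sum>x\<in>S. w x * f x) \<le> c * (\<Sum>x\<in>S. w x * g x)"
proof -
  have "w x * f x \<le> w x * (c * g x)" if "x \<in> S" for x
    using assms[OF that] by (cases "w x = 0") (simp_all add: mult_left_mono)
  then have "(\<Sum>x\<in>S. w x * f x) \<le> (\<Sum>x\<in>S. w x * (c * g x))" by (rule sum_mono)
  also have "\<dots> = c * (\<Sum>x\<in>S. w x * g x)" by (simp add: sum_distrib_left mult_ac)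
  finally show ?thesis .
qed

lemma sum_power2_le_Max_row_norm:
  fixes b :: "nat \<Rightarrow> nat \<Rightarrow> real"
  assumes "i < n"
  shows "(\<Sum>j<n. (b i j)\<^sup>2) \<le> (Max {sqrt (\<Sum>j<n. (b i j)\<^sup>2) | i. i < n})\<^sup>2"
proof -
  have "sqrt (\<Sum>j<n. (b i j)\<^sup>2) \<in> {sqrt (\<Sum>j<n. (b i j)\<^sup>2) | i. i < n}"
    using assms by blast
  then have "sqrt (\<Sum>j<n. (b i j)\<^sup>2) \<le> Max {sqrt (\<Sum>j<n. (b i j)\<^sup>2) | i. i < n}"
    by (rule Max_ge[rotated]) simp
  then have "(sqrt (\<Sum>j<n. (b i j)\<^sup>2))\<^sup>2 \<le> (Max {sqrt (\<Sum>j<n. (b i j)\<^sup>2) | i. i < n})\<^sup>2"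
    by (rule power_mono) (simp add: sum_nonneg)
  then show ?thesis by (simp add: sum_nonneg)
qed

lemma abs_le_Max_abs:
  fixes b :: "nat \<Rightarrow> nat \<Rightarrow> real"
  assumes "i < n" "j < n"
  shows "\<bar>b i j\<bar> \<le> Max {\<bar>b i j\<bar> | i j. i < n \<and> j < n}"
proof (rule Max_ge)
  show "finite {\<bar>b i j\<bar> | i j. i < n \<and> j < n}" by (rule finite_image_set2) auto
  show "\<bar>b i j\<bar> \<in> {\<bar>b i j\<bar> | i j. i < n \<and> j < n}" using assms by blast
qed

theorem proposition2p1:
  fixes n p :: nat and b :: "nat \<Rightarrow> nat \<Rightarrow> real" and \<sigma> \<sigma>star :: real
  assumes "n \<ge> 1"
    and "\<And>i j. i < n \<Longrightarrow> j < n \<Longrightarrow> b i j = b j i"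
    and "\<sigma> = Max {sqrt (\<Sum>j<n. (b i j)\<^sup>2) | i. i < n}"
    and "\<sigma>star = Max {\<bar>b i j\<bar> | i j. i < n \<and> j < n}"
    and "\<sigma>star \<le> 1"
    and "p \<ge> 1"
  shows "(\<integral>g. mtrace (sym_gauss_mat n b g ^\<^sub>m (2 * p)) \<partial>gauss_family n)
         \<le> real n / real (nat \<lceil>\<sigma>\<^sup>2\<rceil> + p) *
           (\<integral>g. mtrace (GOE_like (nat \<lceil>\<sigma>\<^sup>2\<rceil> + p) g ^\<^sub>m (2 * p))
              \<partial>gauss_family (nat \<lceil>\<sigma>\<^sup>2\<rceil> + p))"
proof -
  note b_sym = assms(2) and p = assms(6)
  define r where "r = nat \<lceil>\<sigma>\<^sup>2\<rceil> + p"
  have rows: "\<And>x. x < n \<Longrightarrow> (\<Sum>y<n. (b x y)\<^sup>2) \<le> \<sigma>\<^sup>2"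
    unfolding assms(3) by (rule sum_power2_le_Max_row_norm)
  have b_le_1: "\<bar>b i j\<bar> \<le> 1" if "i < n" "j < n" for i j
    using abs_le_Max_abs[OF that, of b] assms(4,5) by linarith
  have "(\<integral>g. mtrace (sym_gauss_mat n b g ^\<^sub>m (2 * p)) \<partial>gauss_family n)
      = (\<Sum>s\<in>shapes (2 * p). walk_weight s *
           (\<Sum>ds\<in>distinct_lists (card (set s)) n. cycle_prod b (map ((!) ds) s)))"
    using p by (intro expected_trace_shape_sum b_sym) simp
  also have "\<dots> \<le> real n / real r *
      (\<Sum>s\<in>shapes (2 * p). walk_weight s * real (card (distinct_lists (card (set s)) r)))"
    using sum_shape_labellings_le[OF _ even_walk_if_walk_weight_nonzero b_le_1 b_sym rows assms(1) p]
    unfolding r_def by (intro sum_weighted_le walk_weight_nonneg)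
  also have "(\<Sum>s\<in>shapes (2 * p). walk_weight s * real (card (distinct_lists (card (set s)) r)))
      = (\<integral>g. mtrace (GOE_like r g ^\<^sub>m (2 * p)) \<partial>gauss_family r)"
    unfolding GOE_like_def using p
    by (subst expected_trace_shape_sum) (simp_all add: cycle_prod_def)
  finally show ?thesis unfolding r_def .
qed

end
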